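(* Let $F\in Sh^{s,0}_{\Lambda_L}(X)\cap Mod(X)$ be given by data $(V,\rho,W_s,\rho_s,T_s)_{1\le s\le r}$, and let $V_0\subset V$ be as in the context. Set $\rho_0=\rho|_{V_0}$, $W_{0s}=W_s\cap V_0$ (viewing $W_s\subset V$ via $T_s$), $\rho_{0s}=\rho_s|_{W_{0s}}$ and $T_{0s}=T_s|_{W_{0s}}:W_{0s}\to V_0$. Then these are well-defined data of the same type: $V_0$ is $\pi_L$-invariant, $W_{0s}$ is invariant under the monodromy $\rho_s$, the meridian of $K_s$ acts as the identity on $T_{0s}(W_{0s})$, and $\rho_0(\ell_s)\circ T_{0s}=T_{0s}\circ\rho_{0s}(K_s)$. Hence they define a sheaf $F_0$ (the once stabilized subsheaf), and $F_0$ is a subsheaf of $F$.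
   Context: $X=\mathbb{R}^3$ or $S^3$, $k$ a field, $L=K_1\sqcup\dots\sqcup K_r\subset X$ an oriented link with framing $L'=\ell_1\sqcup\dots\sqcup\ell_r$, $\pi_L=\pi_1(X\setminus L)$. $Sh^{s,0}_{\Lambda_L}(X)\cap Mod(X)$: sheaves of $k$-vector spaces on $X$ with micro-support at infinity in the unit conormal $\Lambda_L$, microlocally simple along $\Lambda_L$ with microlocal Morse cone in degree $0$. Such a sheaf is equivalent to data: a representation $\rho:\pi_L\to GL(V)$ (the local system $F|_{X\setminus L}$); for each $s$ a representation $\rho_s:\mathbb{Z}=\pi_1(K_s)\to GL(W_s)$ (the local system $F|_{K_s}$); and a linear map $T_s:W_s\to V$ (restriction from a stalk on $K_s$ to a nearby stalk in the complement), injective with one-dimensional cokernel, such that (a) $\rho(\ell_s)\circ T_s=T_s\circ\rho_s(K_s)$, where $\ell_s$ is the longitude (framing) loop and $K_s$ the generator, and (b) the meridian $m_s$ of $K_s$ acts as the identity on $\mathrm{im}\,T_s$; conversely such data (satisfying (a),(b)) define a sheaf with micro-support in $\Lambda_L$. $V_0:=\sum_{t}\mathrm{im}(\mathrm{id}_V-\rho(m_t))$, the sum over a generating set of $\pi_L$ consisting of meridians (independent of the choice). *)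

theory Defs
  imports Complex_Main "HOL-Algebra.Generated_Groups"
begin

definition lin_on :: "('k \<Rightarrow> 'w::ab_group_add \<Rightarrow> 'w) \<Rightarrow> ('k \<Rightarrow> 'v \<Rightarrow> 'v) \<Rightarrow> 'w set \<Rightarrow> ('w \<Rightarrow> 'v::ab_group_add) \<Rightarrow> bool"
  where "lin_on sW sV W f \<longleftrightarrow>
     (\<forall>x\<in>W. \<forall>y\<in>W. f (x + y) = f x + f y) \<and> (\<forall>c. \<forall>x\<in>W. f (sW c x) = sV c (f x))"

definition is_meridian :: "('g, 'b) monoid_scheme \<Rightarrow> (nat \<Rightarrow> 'g) \<Rightarrow> nat \<Rightarrow> 'g \<Rightarrow> bool"
  where "is_meridian G m r t \<longleftrightarrow>
     (\<exists>s\<in>{1..r}. \<exists>g\<in>carrier G. t = g \<otimes>\<^bsub>G\<^esub> m s \<otimes>\<^bsub>G\<^esub> inv\<^bsub>G\<^esub> g)"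

text \<open>V is the whole vector space of type 'v (scalar multiplication sV); the W_s are subspaces
  of a common ambient space 'w (scalar multiplication sW); rho_s is the Z-representation
  determined by the automorphism A s = rho_s(K_s); G = pi_L with meridians m s and
  longitudes (framing loops) l s.\<close>
definition link_sheaf_data ::
  "('k::field \<Rightarrow> 'v::ab_group_add \<Rightarrow> 'v) \<Rightarrow> ('k \<Rightarrow> 'w::ab_group_add \<Rightarrow> 'w) \<Rightarrow>
   ('g, 'b) monoid_scheme \<Rightarrow> nat \<Rightarrow> (nat \<Rightarrow> 'g) \<Rightarrow> (nat \<Rightarrow> 'g) \<Rightarrow>
   ('g \<Rightarrow> 'v \<Rightarrow> 'v) \<Rightarrow> (nat \<Rightarrow> 'w set) \<Rightarrow> (nat \<Rightarrow> 'w \<Rightarrow> 'w) \<Rightarrow> (nat \<Rightarrow> 'w \<Rightarrow> 'v) \<Rightarrow> bool"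
  where "link_sheaf_data sV sW G r m l rho W A T \<longleftrightarrow>
     vector_space sV \<and> vector_space sW \<and> group G \<and>
     (\<forall>s\<in>{1..r}. m s \<in> carrier G \<and> l s \<in> carrier G) \<and>
     (\<forall>g\<in>carrier G. Vector_Spaces.linear sV sV (rho g) \<and> bij (rho g)) \<and>
     (\<forall>g\<in>carrier G. \<forall>h\<in>carrier G. rho (g \<otimes>\<^bsub>G\<^esub> h) = rho g \<circ> rho h) \<and>
     rho \<one>\<^bsub>G\<^esub> = id \<and>
     (\<forall>s\<in>{1..r}.
        module.subspace sW (W s) \<and>
        lin_on sW sW (W s) (A s) \<and> bij_betw (A s) (W s) (W s) \<and>
        lin_on sW sV (W s) (T s) \<and> inj_on (T s) (W s) \<and>
        (\<exists>v. v \<notin> T s ` W s \<and> module.span sV (insert v (T s ` W s)) = UNIV) \<and>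
        (\<forall>w\<in>W s. rho (l s) (T s w) = T s (A s w)) \<and>
        (\<forall>w\<in>W s. rho (m s) (T s w) = T s w))"

definition V0 :: "('k::field \<Rightarrow> 'v::ab_group_add \<Rightarrow> 'v) \<Rightarrow> ('g \<Rightarrow> 'v \<Rightarrow> 'v) \<Rightarrow> 'g set \<Rightarrow> 'v set"
  where "V0 sV rho M = module.span sV (\<Union>t\<in>M. range (\<lambda>v. v - rho t v))"

definition W0 :: "(nat \<Rightarrow> 'w set) \<Rightarrow> (nat \<Rightarrow> 'w \<Rightarrow> 'v) \<Rightarrow> 'v set \<Rightarrow> nat \<Rightarrow> 'w set"
  where "W0 W T V0set s = {w \<in> W s. T s w \<in> V0set}"

end

theory Submission
  imports Defs
begin

text \<open>Since \<open>v - \<rho>(g h) v = (v - \<rho>(h) v) + (\<rho>(h) v - \<rho>(g) (\<rho>(h) v))\<close> and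
  \<open>v - \<rho>(g\<inverse>) v = -(u - \<rho>(g) u)\<close> for \<open>u = \<rho>(g\<inverse>) v\<close>, the elements \<open>g\<close> with
  \<open>im(id - \<rho>(g)) \<subseteq> V\<^sub>0\<close> form a subgroup containing the generators, hence all of \<open>\<pi>\<^sub>L\<close>.
  Then \<open>\<rho>(g) v = v - (v - \<rho>(g) v)\<close> lies in \<open>V\<^sub>0\<close> whenever \<open>v\<close> does. Everything about
  \<open>W\<^sub>0\<^sub>s\<close> follows formally, since \<open>W\<^sub>0\<^sub>s\<close> is the preimage under \<open>T\<^sub>s\<close> of a subspace
  invariant under \<open>\<rho>(\<ell>\<^sub>s)\<close> and \<open>\<rho>(\<ell>\<^sub>s)\<inverse>\<close>.\<close>

locale vector_space_group_action = vector_space scale + group G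
  for scale :: "'k::field \<Rightarrow> 'v::ab_group_add \<Rightarrow> 'v" and G :: "('g, 'b) monoid_scheme" (structure) +
  fixes rho :: "'g \<Rightarrow> 'v \<Rightarrow> 'v"
  assumes rho_mult: "g \<in> carrier G \<Longrightarrow> h \<in> carrier G \<Longrightarrow> rho (g \<otimes> h) = rho g \<circ> rho h"
    and rho_one: "rho \<one> = id"
begin

lemma rho_cancel_inv:
  assumes "g \<in> carrier G"
  shows "rho g (rho (inv g) v) = v"
  using rho_mult[of g "inv g"] assms rho_one by (metis comp_apply id_apply inv_closed r_inv)

lemma rho_inv_cancel:
  assumes "g \<in> carrier G"
  shows "rho (inv g) (rho g v) = v"
  using rho_mult[of "inv g" g] assms rho_one by (metis comp_apply id_apply inv_closed l_inv)

lemma diff_rho_in_V0: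
  assumes M: "M \<subseteq> carrier G" and g: "g \<in> generate G M"
  shows "v - rho g v \<in> V0 scale rho M"
  using g
proof (induction arbitrary: v rule: generate.induct)
  case one
  show ?case by (simp add: rho_one V0_def span_zero)
next
  case (incl h)
  then show ?case unfolding V0_def by (auto intro: span_base)
next
  case (inv h)
  have h: "h \<in> carrier G" using inv M by auto
  let ?u = "rho (inv h) v"
  have "v - rho (inv h) v = - (?u - rho h ?u)" by (simp add: rho_cancel_inv[OF h])
  moreover have "?u - rho h ?u \<in> V0 scale rho M"
    using inv unfolding V0_def by (auto intro: span_base)
  ultimately show ?case unfolding V0_def by (metis span_neg)
next
  case (eng a b)
  have "a \<in> carrier G" "b \<in> carrier G"
    using eng.hyps generate_in_carrier[OF M] by auto
  then have "v - rho (a \<otimes> b) v = (v - rho b v) + (rho b v - rho a (rho b v))"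
    by (simp add: rho_mult)
  then show ?case using eng.IH unfolding V0_def by (metis span_add)
qed

lemma V0_invariant:
  assumes "M \<subseteq> carrier G" "generate G M = carrier G" "g \<in> carrier G"
  shows "rho g ` V0 scale rho M \<subseteq> V0 scale rho M"
proof
  fix x assume "x \<in> rho g ` V0 scale rho M"
  then obtain v where v: "v \<in> V0 scale rho M" and x: "x = rho g v" by auto
  have "v - (v - rho g v) \<in> V0 scale rho M"
    using diff_rho_in_V0[of M g v] assms v unfolding V0_def by (metis span_diff)
  then show "x \<in> V0 scale rho M" using x by simp
qed

end

lemma link_sheaf_data_group_action:
  assumes "link_sheaf_data sV sW G r m l rho W A T"
  shows "vector_space_group_action sV G rho"
  using assms unfolding link_sheaf_data_def vector_space_group_action_def
    vector_space_group_action_axioms_def by blast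

lemma (in vector_space) subspace_V0: "subspace (V0 scale rho M)"
  unfolding V0_def by simp

lemma subspace_W0:
  assumes "vector_space sW" "vector_space sV"
    and "module.subspace sW (W s)" "lin_on sW sV (W s) (T s)" "module.subspace sV U"
  shows "module.subspace sW (W0 W T U s)"
proof -
  interpret Wsp: vector_space sW by fact
  interpret Vsp: vector_space sV by fact
  have "T s 0 = 0"
    using assms(3,4) unfolding lin_on_def Wsp.subspace_def by (metis add_cancel_right_right)
  then show ?thesis
    using assms(3-5) unfolding Wsp.subspace_def Vsp.subspace_def lin_on_def W0_def by auto
qed

lemma bij_betw_W0:
  assumes bij: "bij_betw (A s) (W s) (W s)"
    and intertwine: "\<forall>w\<in>W s. T s (A s w) = f (T s w)"
    and f_inv: "\<And>v. g (f v) = v" and "f ` U \<subseteq> U" "g ` U \<subseteq> U"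
  shows "bij_betw (A s) (W0 W T U s) (W0 W T U s)"
proof -
  have "A s ` W0 W T U s \<subseteq> W0 W T U s"
    using assms(1,2,4) unfolding W0_def bij_betw_def by auto
  moreover have "W0 W T U s \<subseteq> A s ` W0 W T U s"
  proof
    fix x assume "x \<in> W0 W T U s"
    then have x: "x \<in> W s" "T s x \<in> U" unfolding W0_def by auto
    then obtain w where w: "w \<in> W s" "x = A s w" using bij unfolding bij_betw_def by auto
    have "T s w = g (T s x)" using intertwine w f_inv by simp
    then have "T s w \<in> U" using x(2) assms(5) by auto
    then show "x \<in> A s ` W0 W T U s" using w unfolding W0_def by auto
  qed
  moreover have "inj_on (A s) (W0 W T U s)"
    using bij unfolding bij_betw_def W0_def by (auto intro: inj_on_subset)
  ultimately show ?thesis unfolding bij_betw_def by auto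
qed

theorem proposition3p12:
  fixes sV :: "'k::field \<Rightarrow> 'v::ab_group_add \<Rightarrow> 'v" and sW :: "'k \<Rightarrow> 'w::ab_group_add \<Rightarrow> 'w"
    and G :: "('g, 'b) monoid_scheme" and r :: nat and m l :: "nat \<Rightarrow> 'g"
    and rho :: "'g \<Rightarrow> 'v \<Rightarrow> 'v" and W :: "nat \<Rightarrow> 'w set" and A :: "nat \<Rightarrow> 'w \<Rightarrow> 'w"
    and T :: "nat \<Rightarrow> 'w \<Rightarrow> 'v" and M :: "'g set"
  assumes data: "link_sheaf_data sV sW G r m l rho W A T"
    and M_sub: "M \<subseteq> carrier G"
    and M_gen: "generate G M = carrier G"
    and M_mer: "\<forall>t\<in>M. is_meridian G m r t"
  shows "module.subspace sV (V0 sV rho M)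
       \<and> (\<forall>g\<in>carrier G. rho g ` V0 sV rho M \<subseteq> V0 sV rho M)
       \<and> (\<forall>s\<in>{1..r}.
            module.subspace sW (W0 W T (V0 sV rho M) s)
          \<and> W0 W T (V0 sV rho M) s \<subseteq> W s
          \<and> bij_betw (A s) (W0 W T (V0 sV rho M) s) (W0 W T (V0 sV rho M) s)
          \<and> T s ` W0 W T (V0 sV rho M) s \<subseteq> V0 sV rho M
          \<and> inj_on (T s) (W0 W T (V0 sV rho M) s)
          \<and> (\<forall>w\<in>W0 W T (V0 sV rho M) s. rho (m s) (T s w) = T s w)
          \<and> (\<forall>w\<in>W0 W T (V0 sV rho M) s. rho (l s) (T s w) = T s (A s w)))"
proof -
  interpret vector_space_group_action sV G rho
    using data by (rule link_sheaf_data_group_action)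
  have vsW: "vector_space sW" and l: "\<And>s. s \<in> {1..r} \<Longrightarrow> l s \<in> carrier G"
    and Ws: "\<And>s. s \<in> {1..r} \<Longrightarrow> module.subspace sW (W s) \<and>
        bij_betw (A s) (W s) (W s) \<and> lin_on sW sV (W s) (T s) \<and> inj_on (T s) (W s) \<and>
        (\<forall>w\<in>W s. rho (l s) (T s w) = T s (A s w)) \<and> (\<forall>w\<in>W s. rho (m s) (T s w) = T s w)"
    using data unfolding link_sheaf_data_def by blast+
  have invariant: "\<forall>g\<in>carrier G. rho g ` V0 sV rho M \<subseteq> V0 sV rho M"
    using V0_invariant[OF M_sub M_gen] by blast
  have "module.subspace sW (W0 W T (V0 sV rho M) s)
      \<and> bij_betw (A s) (W0 W T (V0 sV rho M) s) (W0 W T (V0 sV rho M) s)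
      \<and> inj_on (T s) (W0 W T (V0 sV rho M) s)" if s: "s \<in> {1..r}" for s
  proof (intro conjI)
    show "module.subspace sW (W0 W T (V0 sV rho M) s)"
      using Ws[OF s] by (intro subspace_W0[OF vsW vector_space_axioms] subspace_V0) auto
    show "bij_betw (A s) (W0 W T (V0 sV rho M) s) (W0 W T (V0 sV rho M) s)"
      using Ws[OF s] invariant l[OF s] rho_inv_cancel[OF l[OF s]]
      by (intro bij_betw_W0[where f = "rho (l s)" and g = "rho (inv\<^bsub>G\<^esub> l s)"]) auto
    show "inj_on (T s) (W0 W T (V0 sV rho M) s)"
      using Ws[OF s] unfolding W0_def by (auto intro: inj_on_subset)
  qed
  then show ?thesis
    using Ws invariant subspace_V0 unfolding W0_def by auto
qed

end
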